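(* Let $G$ be a connected graph with detour sequence $D: d_1,d_2,\ldots,d_n$. Then $\max_{2\le i\le n}\{d_i-d_{i-1}\} \le \left\lfloor \frac{\tau(G)}{2} \right\rfloor$.
   Context: All graphs are finite and simple. The order of a path is its number of vertices. For a vertex $v$ of $G$, $\tau(v)$ is the order of a longest path in $G$ having $v$ as an endvertex, and $\tau(G)$ is the order of a longest path in $G$. The detour sequence of $G$ is the nondecreasing sequence $d_1\le d_2\le\cdots\le d_n$ of the values $\tau(v)$, $v\in V(G)$, where $n=|V(G)|$. The quantity $\max_{2\le i\le n}\{d_i-d_{i-1}\}$ is called the maximum gap of $D$. *)

theory Defs
  imports Main "HOL-Library.Multiset"
begin

definition simple_graph :: "'a set \<Rightarrow> ('a \<Rightarrow> 'a \<Rightarrow> bool) \<Rightarrow> bool" where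
  "simple_graph V E \<longleftrightarrow> finite V \<and> (\<forall>x y. E x y \<longrightarrow> x \<in> V \<and> y \<in> V)
     \<and> (\<forall>x y. E x y \<longrightarrow> E y x) \<and> (\<forall>x. \<not> E x x)"

definition is_path :: "'a set \<Rightarrow> ('a \<Rightarrow> 'a \<Rightarrow> bool) \<Rightarrow> 'a list \<Rightarrow> bool" where
  "is_path V E p \<longleftrightarrow> p \<noteq> [] \<and> set p \<subseteq> V \<and> distinct p
     \<and> (\<forall>i. Suc i < length p \<longrightarrow> E (p ! i) (p ! Suc i))"

definition connected_graph :: "'a set \<Rightarrow> ('a \<Rightarrow> 'a \<Rightarrow> bool) \<Rightarrow> bool" where
  "connected_graph V E \<longleftrightarrow> V \<noteq> {} \<and>
     (\<forall>u\<in>V. \<forall>v\<in>V. \<exists>p. is_path V E p \<and> hd p = u \<and> last p = v)"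

definition tau_v :: "'a set \<Rightarrow> ('a \<Rightarrow> 'a \<Rightarrow> bool) \<Rightarrow> 'a \<Rightarrow> nat" where
  "tau_v V E v = Max {length p | p. is_path V E p \<and> (hd p = v \<or> last p = v)}"

definition tau_G :: "'a set \<Rightarrow> ('a \<Rightarrow> 'a \<Rightarrow> bool) \<Rightarrow> nat" where
  "tau_G V E = Max {length p | p. is_path V E p}"

definition detour_seq :: "'a set \<Rightarrow> ('a \<Rightarrow> 'a \<Rightarrow> bool) \<Rightarrow> nat list" where
  "detour_seq V E = sorted_list_of_multiset (image_mset (tau_v V E) (mset_set V))"

end

theory Submission
  imports Defs
begin

text \<open>Let \<open>P\<close> be a longest path and \<open>v\<close> any vertex. Follow a path from \<open>v\<close> until it first
  meets \<open>P\<close>, then continue along the longer of the two pieces into which that vertex cuts \<open>P\<close>: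
  this is a path with endvertex \<open>v\<close> and order at least \<open>\<tau>(G)/2\<close>. Hence every \<open>\<tau>(v)\<close> lies in
  the interval \<open>[\<lceil>\<tau>(G)/2\<rceil>, \<tau>(G)]\<close>, so any two entries of the detour sequence differ by at
  most \<open>\<lfloor>\<tau>(G)/2\<rfloor>\<close>.\<close>

lemma is_path_singleton: "v \<in> V \<Longrightarrow> is_path V E [v]"
  unfolding is_path_def by simp

lemma is_path_drop:
  assumes "is_path V E p" "n < length p"
  shows "is_path V E (drop n p)"
  using assms unfolding is_path_def
  by (auto dest: in_set_dropD simp: add.commute)

lemma is_path_take:
  assumes "is_path V E p" "0 < n"
  shows "is_path V E (take n p)"
  using assms unfolding is_path_def
  by (auto dest: in_set_takeD)

lemma is_path_rev:
  assumes "simple_graph V E" "is_path V E p"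
  shows "is_path V E (rev p)"
  unfolding is_path_def
proof (intro conjI allI impI)
  show "rev p \<noteq> []" "set (rev p) \<subseteq> V" "distinct (rev p)"
    using assms(2) unfolding is_path_def by auto
  fix i assume i: "Suc i < length (rev p)"
  define k where "k = length p - Suc (Suc i)"
  have "Suc k = length p - Suc i" using i unfolding k_def by simp
  moreover have "E (p ! k) (p ! Suc k)"
    using assms(2) i unfolding is_path_def k_def by auto
  ultimately have "E (p ! (length p - Suc i)) (p ! k)"
    using assms(1) unfolding simple_graph_def by metis
  then show "E (rev p ! i) (rev p ! Suc i)"
    using i by (simp add: rev_nth k_def)
qed

lemma is_path_Cons:
  assumes "is_path V E p" "a \<in> V" "a \<notin> set p" "E a (hd p)"
  shows "is_path V E (a # p)"
  unfolding is_path_def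
proof (intro conjI allI impI)
  show "a # p \<noteq> []" by simp
  show "set (a # p) \<subseteq> V" "distinct (a # p)" using assms unfolding is_path_def by auto
  fix i assume i: "Suc i < length (a # p)"
  show "E ((a # p) ! i) ((a # p) ! Suc i)"
  proof (cases i)
    case 0
    then show ?thesis using assms by (simp add: hd_conv_nth is_path_def)
  next
    case (Suc j)
    then show ?thesis using assms i unfolding is_path_def by auto
  qed
qed

lemma is_path_ConsD:
  assumes "is_path V E (a # q)" "q \<noteq> []"
  shows "is_path V E q" "E a (hd q)"
proof -
  show "is_path V E q" using assms unfolding is_path_def
    by (auto simp del: nth_Cons_Suc)
  have "E ((a # q) ! 0) ((a # q) ! Suc 0)" using assms unfolding is_path_def by auto
  then show "E a (hd q)" using assms(2) by (simp add: hd_conv_nth)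
qed

lemma is_path_length_le_card:
  assumes "simple_graph V E" "is_path V E p"
  shows "length p \<le> card V"
proof -
  have "length p = card (set p)"
    using assms(2) distinct_card unfolding is_path_def by metis
  also have "\<dots> \<le> card V"
    using assms unfolding is_path_def simple_graph_def by (intro card_mono) auto
  finally show ?thesis .
qed

lemma longer_half_of_path:
  assumes G: "simple_graph V E" and P: "is_path V E P" and a: "a \<in> set P"
  shows "\<exists>p. is_path V E p \<and> hd p = a \<and> set p \<subseteq> set P \<and> length P \<le> 2 * length p"
proof -
  obtain j where j: "j < length P" "P ! j = a" using a by (auto simp: in_set_conv_nth)
  show ?thesis
  proof (cases "length P \<le> 2 * (length P - j)")
    case True
    with j P show ?thesis
      by (intro exI[of _ "drop j P"]) (auto simp: hd_drop_conv_nth is_path_drop dest: in_set_dropD)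
  next
    case False
    have "hd (rev (take (Suc j) P)) = a"
      using j by (simp add: hd_rev last_conv_nth take_Suc_conv_app_nth)
    with False j is_path_rev[OF G is_path_take[OF P]] show ?thesis
      by (intro exI[of _ "rev (take (Suc j) P)"]) (auto dest: in_set_takeD)
  qed
qed

lemma path_meeting_path_extends_to_half:
  assumes G: "simple_graph V E" and P: "is_path V E P"
  shows "is_path V E q \<Longrightarrow> set q \<inter> set P \<noteq> {} \<Longrightarrow>
     \<exists>p. is_path V E p \<and> hd p = hd q \<and> set p \<subseteq> set P \<union> set q \<and> length P \<le> 2 * length p"
proof (induction q)
  case Nil
  then show ?case by simp
next
  case (Cons a q)
  show ?case
  proof (cases "a \<in> set P")
    case True
    then show ?thesis using longer_half_of_path[OF G P] by fastforce
  next
    case False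
    then have q: "q \<noteq> []" "set q \<inter> set P \<noteq> {}" using Cons.prems by auto
    note q_path = is_path_ConsD[OF Cons.prems(1) q(1)]
    obtain p where p: "is_path V E p" "hd p = hd q" "set p \<subseteq> set P \<union> set q"
        "length P \<le> 2 * length p"
      using Cons.IH[OF q_path(1) q(2)] by blast
    have "a \<notin> set q" "a \<in> V" using Cons.prems(1) unfolding is_path_def by auto
    with p False q_path(2) have "is_path V E (a # p)" by (intro is_path_Cons) auto
    with p show ?thesis by (intro exI[of _ "a # p"]) auto
  qed
qed

lemma finite_path_lengths:
  assumes "simple_graph V E"
  shows "finite {length p | p. is_path V E p}"
  by (rule finite_subset[of _ "{..card V}"]) (use is_path_length_le_card[OF assms] in auto)

lemma longest_path_exists:
  assumes "simple_graph V E" "V \<noteq> {}"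
  obtains P where "is_path V E P" "length P = tau_G V E"
proof -
  obtain v where v: "v \<in> V" using assms(2) by blast
  have "length [v] \<in> {length p | p. is_path V E p}" using is_path_singleton[OF v] by blast
  then have ne: "{length p | p. is_path V E p} \<noteq> {}" by blast
  have "tau_G V E \<in> {length p | p. is_path V E p}" unfolding tau_G_def
    by (rule Max_in[OF finite_path_lengths[OF assms(1)] ne])
  then obtain P where "is_path V E P" "length P = tau_G V E" by auto
  then show ?thesis by (rule that)
qed

lemma path_length_le_tau_v:
  assumes "simple_graph V E" "is_path V E p" "hd p = v"
  shows "length p \<le> tau_v V E v"
proof -
  have "{length p | p. is_path V E p \<and> (hd p = v \<or> last p = v)} \<subseteq> {length p | p. is_path V E p}"
    by blast
  then have "finite {length p | p. is_path V E p \<and> (hd p = v \<or> last p = v)}"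
    using finite_path_lengths[OF assms(1)] by (rule finite_subset)
  moreover have "length p \<in> {length p | p. is_path V E p \<and> (hd p = v \<or> last p = v)}"
    using assms(2,3) by blast
  ultimately show ?thesis unfolding tau_v_def by (rule Max_ge)
qed

lemma tau_v_le_tau_G:
  assumes "simple_graph V E" "v \<in> V"
  shows "tau_v V E v \<le> tau_G V E"
  unfolding tau_v_def tau_G_def
proof (rule Max_mono)
  show "{length p | p. is_path V E p \<and> (hd p = v \<or> last p = v)} \<noteq> {}"
    using is_path_singleton[OF assms(2)] by force
qed (use finite_path_lengths[OF assms(1)] in auto)

lemma tau_G_le_double_tau_v:
  assumes G: "simple_graph V E" and conn: "connected_graph V E" and v: "v \<in> V"
  shows "tau_G V E \<le> 2 * tau_v V E v"
proof -
  obtain P where P: "is_path V E P" "length P = tau_G V E"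
    using longest_path_exists[OF G] v by blast
  have "hd P \<in> set P" "set P \<subseteq> V" using P(1) unfolding is_path_def by auto
  then obtain q where q: "is_path V E q" "hd q = v" "last q = hd P"
    using conn v unfolding connected_graph_def by blast
  have "last q \<in> set q" using q(1) unfolding is_path_def by simp
  with q(3) \<open>hd P \<in> set P\<close> have "set q \<inter> set P \<noteq> {}" by auto
  then obtain p where p: "is_path V E p" "hd p = v" "length P \<le> 2 * length p"
    using path_meeting_path_extends_to_half[OF G P(1) q(1)] q(2) by auto
  have "length p \<le> tau_v V E v" using path_length_le_tau_v[OF G p(1,2)] .
  with p(3) P(2) show ?thesis by linarith
qed

lemma tau_v_diff_le_half_tau_G:
  assumes "simple_graph V E" "connected_graph V E" "u \<in> V" "v \<in> V"
  shows "tau_v V E u - tau_v V E v \<le> tau_G V E div 2"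
  using tau_v_le_tau_G[OF assms(1,3)] tau_G_le_double_tau_v[OF assms(1,2,4)] by presburger

lemma set_detour_seq:
  assumes "simple_graph V E"
  shows "set (detour_seq V E) = tau_v V E ` V"
  using assms unfolding detour_seq_def simple_graph_def by simp

theorem corollary1p5:
  fixes V :: "'a set" and E :: "'a \<Rightarrow> 'a \<Rightarrow> bool"
  assumes "simple_graph V E" and "connected_graph V E"
  shows "\<forall>i. 1 \<le> i \<and> i < length (detour_seq V E) \<longrightarrow>
           detour_seq V E ! i - detour_seq V E ! (i - 1) \<le> tau_G V E div 2"
proof (intro allI impI)
  fix i assume i: "1 \<le> i \<and> i < length (detour_seq V E)"
  have "detour_seq V E ! i \<in> tau_v V E ` V" "detour_seq V E ! (i - 1) \<in> tau_v V E ` V"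
    using i set_detour_seq[OF assms(1)] by (metis nth_mem less_imp_diff_less)+
  then obtain a b where "a \<in> V" "b \<in> V"
      "detour_seq V E ! i = tau_v V E a" "detour_seq V E ! (i - 1) = tau_v V E b"
    by blast
  then show "detour_seq V E ! i - detour_seq V E ! (i - 1) \<le> tau_G V E div 2"
    using tau_v_diff_le_half_tau_G[OF assms] by simp
qed

end
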